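(* Let $d\ge1$, let $\mu$ be a probability measure on $(0,+\infty)$ and fix $\alpha>0$. Then, almost surely, for every $x\in\mathbb{R}^d\setminus B$, $$\frac{T(B,x)}{\|x\|}\ge \alpha\left(1-S_{\|x\|}(\xi_\alpha)-\frac{1}{\|x\|}\right).$$
   Context: $B_r$ is the closed Euclidean ball of radius $r$ centered at $0$, $B=B_1$. Let $\chi$ be a Poisson point process on $\mathbb{R}^d\times[0,+\infty)\times(0,+\infty)$ with intensity the product of Lebesgue measure on $\mathbb{R}^d\times[0,+\infty)$ and $\mu$. Passage times: $\tau(x,x)=0$; for each $(c,t,r)\in\chi$ and $y\in(c+B_r)\setminus\{c\}$, $\tau(c,y)=t$; otherwise $\tau(x,y)=+\infty$. A path is a finite sequence $\pi=(x_0,\dots,x_k)$ of distinct points of $\mathbb{R}^d$; $T(\pi)=\sum_{i=0}^{k-1}\tau(x_i,x_{i+1})$, and $T(A,x)=\inf\{T(\pi):\pi\text{ a path from some }a\in A\text{ to }x\}$. Define $\xi_\alpha=\{(c,r):\exists t\le\alpha r,\ (c,t,r)\in\chi\}$, a Poisson point process on $\mathbb{R}^d\times(0,+\infty)$ with intensity Lebesgue $\otimes\,\alpha r\mu(dr)$. For $x\in\mathbb{R}^d$, $r(x)=r$ if $(x,r)\in\xi_\alpha$ (a.s. unique), and $r(x)=0$ otherwise. For a path $\pi=(x_0,\dots,x_n)$, $|\pi|=\sum_{i=0}^{n-1}\|x_{i+1}-x_i\|$ and $A(\pi)=\sum_{i=0}^n r(x_i)$. For $l>0$, $S_l(\xi_\alpha)=\sup\{A(\pi)/|\pi|\}$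 over all paths with $x_0=0$ and $|\pi|>l$. *)

theory Defs
  imports "HOL-Probability.Probability"
begin

text \<open>Points of the Poisson process: (centre c, time t, radius r).\<close>
type_synonym 'd pt = "(real ^ 'd) \<times> real \<times> real"

definition intensity :: "real measure \<Rightarrow> ('d::finite) pt measure" where
  "intensity \<mu> = lborel \<Otimes>\<^sub>M (density lborel (indicator {0..}) \<Otimes>\<^sub>M \<mu>)"

definition poisson_point_process :: "'a measure \<Rightarrow> ('a \<Rightarrow> 'b set) \<Rightarrow> 'b measure \<Rightarrow> bool" where
  "poisson_point_process M N \<nu> \<longleftrightarrow>
     prob_space M \<and>
     (\<forall>A \<in> sets \<nu>. emeasure \<nu> A < \<infinity> \<longrightarrow>
        (\<lambda>\<omega>. card (N \<omega> \<inter> A)) \<in> measurable M (count_space UNIV) \<and>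
        (AE \<omega> in M. finite (N \<omega> \<inter> A)) \<and>
        (\<forall>k::nat. measure M {\<omega> \<in> space M. card (N \<omega> \<inter> A) = k}
             = measure \<nu> A ^ k / fact k * exp (- measure \<nu> A))) \<and>
     (\<forall>A \<in> sets \<nu>. emeasure \<nu> A = \<infinity> \<longrightarrow> (AE \<omega> in M. infinite (N \<omega> \<inter> A))) \<and>
     (\<forall>I (A :: nat \<Rightarrow> 'b set). finite I \<longrightarrow> (\<forall>i\<in>I. A i \<in> sets \<nu> \<and> emeasure \<nu> (A i) < \<infinity>)
        \<longrightarrow> disjoint_family_on A I \<longrightarrow>
        prob_space.indep_vars M (\<lambda>_. count_space UNIV) (\<lambda>i \<omega>. card (N \<omega> \<inter> A i)) I)"

definition tau :: "('d::finite) pt set \<Rightarrow> real ^ 'd \<Rightarrow> real ^ 'd \<Rightarrow> ereal" where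
  "tau chi x y =
     (if x = y then 0
      else if \<exists>t r. (x, t, r) \<in> chi \<and> y \<in> cball x r
        then ereal (SOME t. \<exists>r. (x, t, r) \<in> chi \<and> y \<in> cball x r)
      else \<infinity>)"

definition is_path :: "'a list \<Rightarrow> bool" where
  "is_path p \<longleftrightarrow> p \<noteq> [] \<and> distinct p"

definition path_time :: "('d::finite) pt set \<Rightarrow> (real ^ 'd) list \<Rightarrow> ereal" where
  "path_time chi p = (\<Sum>i<length p - 1. tau chi (p ! i) (p ! Suc i))"

definition passage_time :: "('d::finite) pt set \<Rightarrow> (real ^ 'd) set \<Rightarrow> real ^ 'd \<Rightarrow> ereal" where
  "passage_time chi A x =
     (INF p \<in> {p. is_path p \<and> hd p \<in> A \<and> last p = x}. path_time chi p)"

definition xi :: "real \<Rightarrow> ('d::finite) pt set \<Rightarrow> ((real ^ 'd) \<times> real) set" where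
  "xi \<alpha> chi = {(c, r). \<exists>t \<le> \<alpha> * r. (c, t, r) \<in> chi}"

text \<open>r(x): the radius attached to x in xi if there is one (a.s. unique), else 0.\<close>
definition rad :: "((real ^ 'd) \<times> real) set \<Rightarrow> real ^ 'd \<Rightarrow> real" where
  "rad \<xi> x = (if \<exists>r. (x, r) \<in> \<xi> then (SOME r. (x, r) \<in> \<xi>) else 0)"

definition path_len :: "(real ^ 'd) list \<Rightarrow> real" where
  "path_len p = (\<Sum>i<length p - 1. dist (p ! i) (p ! Suc i))"

definition path_A :: "((real ^ 'd) \<times> real) set \<Rightarrow> (real ^ 'd) list \<Rightarrow> real" where
  "path_A \<xi> p = (\<Sum>i<length p. rad \<xi> (p ! i))"

definition S :: "real \<Rightarrow> ((real ^ 'd) \<times> real) set \<Rightarrow> ereal" where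
  "S l \<xi> = (SUP p \<in> {p. is_path p \<and> hd p = 0 \<and> path_len p > l}.
              ereal (path_A \<xi> p / path_len p))"

end

(*
  A jump from the centre c of a mark (c, t, r) costs t. If t \<le> \<alpha> r the mark belongs to \<xi>\<^sub>\<alpha> and the
  jump covers a distance at most r(c); otherwise it covers at most r < t/\<alpha>. Either way
  \<tau>(c, y) \<ge> \<alpha> (|y - c| - r(c)), and summing along a path gives T(\<pi>) \<ge> \<alpha> (|\<pi>| - A(\<pi>)).
  A path from the unit ball to x is rerouted through 0 at the price of one unit of length, and a
  path \<pi> from 0 to x satisfies A(\<pi>) \<le> S\<^bsub>|x|\<^esub> |\<pi>| (append a point close to x to make it longer
  than |x|). As |\<pi>| \<ge> |x|, this yields T(B, x) \<ge> \<alpha> (|x| (1 - S\<^bsub>|x|\<^esub>) - 1).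

  The only probabilistic input is that almost surely all times are nonnegative, all radii positive
  and all centres distinct: the first two hold because the intensity gives no mass to the
  exceptional sets, the last because grids of cells with \<Sum> \<nu>(cell)\<^sup>2 \<longrightarrow> 0 eventually separate all
  points of the process.
*)

theory Submission
  imports Defs
begin

locale admissible_config =
  fixes C :: "('d::finite) pt set"
  assumes marks_pos: "(c, t, r) \<in> C \<Longrightarrow> 0 \<le> t \<and> 0 < r"
    and inj_centre: "inj_on fst C"
begin

lemma mark_unique:
  assumes "(c, t, r) \<in> C" "(c, t', r') \<in> C"
  shows "t' = t" "r' = r"
  using inj_onD[OF inj_centre _ assms(2,1)] by auto

lemma tau_eq_mark:
  assumes "(u, t, r) \<in> C" "v \<in> cball u r" "u \<noteq> v"
  shows "tau C u v = ereal t"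
proof -
  have "(SOME t. \<exists>r. (u, t, r) \<in> C \<and> v \<in> cball u r) = t"
    using assms(1,2) by (intro some_equality) (auto dest: mark_unique[OF assms(1)])
  moreover have "\<exists>t r. (u, t, r) \<in> C \<and> v \<in> cball u r"
    using assms(1,2) by blast
  ultimately show ?thesis
    using assms(3) unfolding tau_def by (simp del: mem_cball)
qed

lemma tau_no_mark:
  assumes "\<not> (u \<noteq> v \<and> (\<exists>t r. (u, t, r) \<in> C \<and> v \<in> cball u r))"
  shows "tau C u v = (if u = v then 0 else \<infinity>)"
  using assms unfolding tau_def by (cases "u = v") (simp_all del: mem_cball)

lemma tau_nonneg: "tau C u v \<ge> 0"
proof (cases "u \<noteq> v \<and> (\<exists>t r. (u, t, r) \<in> C \<and> v \<in> cball u r)")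
  case True
  then obtain t r where "(u, t, r) \<in> C" "v \<in> cball u r" "u \<noteq> v" by auto
  then show ?thesis using tau_eq_mark marks_pos by fastforce
qed (simp add: tau_no_mark)

lemma rad_nonneg: "rad (xi \<alpha> C) c \<ge> 0"
proof (cases "\<exists>r. (c, r) \<in> xi \<alpha> C")
  case True
  then have "(c, rad (xi \<alpha> C) c) \<in> xi \<alpha> C"
    unfolding rad_def using someI_ex[OF True] by simp
  then obtain t where "(c, t, rad (xi \<alpha> C) c) \<in> C"
    unfolding xi_def by auto
  from marks_pos[OF this] show ?thesis by simp
qed (simp add: rad_def)

lemma rad_eq_mark:
  assumes "(c, t, r) \<in> C" "t \<le> \<alpha> * r"
  shows "rad (xi \<alpha> C) c = r"
proof -
  have r: "(c, r) \<in> xi \<alpha> C"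
    using assms unfolding xi_def by auto
  moreover have "r' = r" if "(c, r') \<in> xi \<alpha> C" for r'
    using that unfolding xi_def by (auto dest: mark_unique[OF assms(1)])
  ultimately have "(SOME r. (c, r) \<in> xi \<alpha> C) = r"
    by (rule some_equality)
  with r show ?thesis
    unfolding rad_def by auto
qed

lemma tau_ge:
  assumes "0 \<le> \<alpha>"
  shows "tau C u v \<ge> ereal (\<alpha> * (dist u v - rad (xi \<alpha> C) u))"
proof (cases "u \<noteq> v \<and> (\<exists>t r. (u, t, r) \<in> C \<and> v \<in> cball u r)")
  case True
  then obtain t r where tr: "(u, t, r) \<in> C" "v \<in> cball u r" "u \<noteq> v" by auto
  have "\<alpha> * (dist u v - rad (xi \<alpha> C) u) \<le> t"
  proof (cases "t \<le> \<alpha> * r")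
    case True
    then have "\<alpha> * (dist u v - rad (xi \<alpha> C) u) \<le> 0"
      using rad_eq_mark[OF tr(1)] tr(2) assms by (simp add: mult_nonneg_nonpos)
    then show ?thesis using marks_pos[OF tr(1)] by linarith
  next
    case False
    have "\<alpha> * (dist u v - rad (xi \<alpha> C) u) \<le> \<alpha> * r"
      using tr(2) rad_nonneg[of \<alpha> u] assms by (intro mult_left_mono) auto
    then show ?thesis using False by linarith
  qed
  then show ?thesis using tau_eq_mark[OF tr] by simp
next
  case False
  then have "tau C u v = (if u = v then 0 else \<infinity>)"
    by (rule tau_no_mark)
  moreover have "\<alpha> * (0 - rad (xi \<alpha> C) u) \<le> 0"
    using rad_nonneg[of \<alpha> u] assms by (simp add: mult_nonneg_nonneg)
  ultimately show ?thesis
    by (cases "u = v") auto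
qed

end

lemma path_time_Cons_Cons: "path_time C (u # v # p) = tau C u v + path_time C (v # p)"
  unfolding path_time_def by (simp add: sum.lessThan_Suc_shift del: sum.lessThan_Suc)

lemma path_time_singleton: "path_time C [u] = 0"
  unfolding path_time_def by simp

lemma path_len_Cons_Cons: "path_len (u # v # p) = dist u v + path_len (v # p)"
  unfolding path_len_def by (simp add: sum.lessThan_Suc_shift del: sum.lessThan_Suc)

lemma path_len_singleton: "path_len [u] = 0"
  unfolding path_len_def by simp

lemma path_len_snoc: "p \<noteq> [] \<Longrightarrow> path_len (p @ [y]) = path_len p + dist (last p) y"
  by (induction p rule: induct_list012) (auto simp: path_len_Cons_Cons path_len_singleton)

lemma dist_hd_last_le_path_len: "p \<noteq> [] \<Longrightarrow> dist (hd p) (last p) \<le> path_len p"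
proof (induction p rule: induct_list012)
  case (3 x y p)
  then show ?case
    using dist_triangle[of x "last (y # p)" y] by (simp add: path_len_Cons_Cons)
qed (auto simp: path_len_singleton)

lemma path_A_Cons: "path_A \<xi> (u # p) = rad \<xi> u + path_A \<xi> p"
  unfolding path_A_def by (simp add: sum.lessThan_Suc_shift del: sum.lessThan_Suc)

lemma path_A_Nil: "path_A \<xi> [] = 0"
  unfolding path_A_def by simp

lemma path_A_snoc: "path_A \<xi> (p @ [y]) = path_A \<xi> p + rad \<xi> y"
  by (induction p) (auto simp: path_A_Cons path_A_Nil)

context admissible_config
begin

lemma path_A_nonneg: "path_A (xi \<alpha> C) p \<ge> 0"
  unfolding path_A_def by (intro sum_nonneg rad_nonneg)

lemma path_time_nonneg: "path_time C p \<ge> 0"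
  unfolding path_time_def by (intro sum_nonneg tau_nonneg)

lemma path_time_append_ge: "q \<noteq> [] \<Longrightarrow> path_time C q \<le> path_time C (p @ q)"
proof (induction p)
  case (Cons x p)
  then obtain y r where "p @ q = y # r" by (cases "p @ q") auto
  then show ?case
    using Cons tau_nonneg[of x y] by (simp add: path_time_Cons_Cons add_increasing)
qed simp

lemma path_time_ge:
  assumes "0 \<le> \<alpha>" "p \<noteq> []"
  shows "ereal (\<alpha> * (path_len p - path_A (xi \<alpha> C) p)) \<le> path_time C p"
  using assms(2)
proof (induction p rule: induct_list012)
  case (2 x)
  then show ?case
    using rad_nonneg[of \<alpha> x] assms(1)
    by (simp add: path_time_singleton path_len_singleton path_A_Cons path_A_Nil mult_nonneg_nonneg)
next
  case (3 x y p)
  have "ereal (\<alpha> * (path_len (x # y # p) - path_A (xi \<alpha> C) (x # y # p)))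
      = ereal (\<alpha> * (dist x y - rad (xi \<alpha> C) x))
        + ereal (\<alpha> * (path_len (y # p) - path_A (xi \<alpha> C) (y # p)))"
    by (simp add: path_len_Cons_Cons path_A_Cons algebra_simps)
  also have "\<dots> \<le> tau C x y + path_time C (y # p)"
    using 3 tau_ge[OF assms(1)] by (intro add_mono) auto
  finally show ?case
    by (simp add: path_time_Cons_Cons)
qed simp

lemma path_A_le_S:
  assumes q: "is_path q" "hd q = 0" "last q = x"
    and S: "S (norm x) (xi \<alpha> C) = ereal s"
  shows "0 \<le> s" "path_A (xi \<alpha> C) q \<le> s * path_len q"
proof -
  have q_ne: "q \<noteq> []"
    using q(1) by (simp add: is_path_def)
  have extend: "0 \<le> s \<and> path_A (xi \<alpha> C) q \<le> s * (path_len q + dist x y)"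
    if y: "y \<notin> set q" for y
  proof -
    let ?q = "q @ [y]"
    have len: "path_len ?q = path_len q + dist x y"
      using path_len_snoc[OF q_ne] q(3) by simp
    have "y \<noteq> x"
      using y q(3) q_ne by auto
    then have "0 < dist x y"
      by simp
    moreover have "norm x \<le> path_len q"
      using dist_hd_last_le_path_len[OF q_ne] q by simp
    ultimately have long: "norm x < path_len ?q"
      using len by linarith
    moreover have "is_path ?q" "hd ?q = 0"
      using q y q_ne by (auto simp: is_path_def)
    ultimately have "ereal (path_A (xi \<alpha> C) ?q / path_len ?q) \<le> S (norm x) (xi \<alpha> C)"
      unfolding S_def by (intro SUP_upper) auto
    then have ratio: "path_A (xi \<alpha> C) ?q / path_len ?q \<le> s"
      using S by simp
    have len_pos: "0 < path_len ?q"
      using long norm_ge_zero[of x] by linarith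
    have "0 \<le> s"
      using ratio len_pos path_A_nonneg[of \<alpha> ?q] by (meson divide_nonneg_pos order_trans)
    moreover have "path_A (xi \<alpha> C) ?q \<le> s * path_len ?q"
      using ratio len_pos by (simp add: divide_le_eq)
    ultimately show ?thesis
      using len rad_nonneg[of \<alpha> y] by (simp add: path_A_snoc)
  qed
  have avoid: "\<exists>y\<in>ball x e. y \<notin> set q" if "0 < e" for e
  proof -
    have "infinite (ball x e - set q)"
      using islimpt_UNIV[of x] that by (simp add: islimpt_eq_infinite_ball Diff_infinite_finite)
    then obtain y where "y \<in> ball x e - set q"
      using infinite_imp_nonempty by blast
    then show ?thesis
      by blast
  qed
  then obtain y where "y \<notin> set q"
    using zero_less_one by blast
  with extend show s_nonneg: "0 \<le> s" by blast
  show "path_A (xi \<alpha> C) q \<le> s * path_len q"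
  proof (rule field_le_epsilon)
    fix e :: real
    assume "0 < e"
    then obtain y where y: "dist x y < e / (s + 1)" "y \<notin> set q"
      using avoid[of "e / (s + 1)"] s_nonneg by auto
    have "s * dist x y \<le> s * (e / (s + 1))"
      using y(1) s_nonneg by (intro mult_left_mono) auto
    also have "\<dots> \<le> e"
      using s_nonneg \<open>0 < e\<close> by (simp add: field_simps)
    finally show "path_A (xi \<alpha> C) q \<le> s * path_len q + e"
      using extend[OF y(2)] by (simp add: algebra_simps)
  qed
qed

lemma path_from_unit_ball_reroute:
  assumes "0 \<le> \<alpha>" and p: "is_path p" "hd p \<in> cball 0 1" "last p = x"
  obtains q where "is_path q" "hd q = 0" "last q = x"
    "ereal (\<alpha> * (path_len q - 1 - path_A (xi \<alpha> C) q)) \<le> path_time C p"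
proof (cases "0 \<in> set p")
  case True
  then obtain a b where ab: "p = a @ 0 # b"
    by (meson split_list)
  have "ereal (\<alpha> * (path_len (0 # b) - 1 - path_A (xi \<alpha> C) (0 # b)))
      \<le> ereal (\<alpha> * (path_len (0 # b) - path_A (xi \<alpha> C) (0 # b)))"
    using assms(1) by (intro ereal_less_eq(3)[THEN iffD2] mult_left_mono) auto
  also have "\<dots> \<le> path_time C (0 # b)"
    using path_time_ge[OF assms(1)] by simp
  also have "\<dots> \<le> path_time C p"
    using path_time_append_ge[of "0 # b" a] ab by simp
  finally show ?thesis
    using that[of "0 # b"] p ab by (simp add: is_path_def)
next
  case False
  obtain h r where hr: "p = h # r"
    using p by (cases p) (auto simp: is_path_def)
  have "path_len (0 # p) \<le> 1 + path_len p"
    using p hr by (simp add: path_len_Cons_Cons)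
  moreover have "path_A (xi \<alpha> C) p \<le> path_A (xi \<alpha> C) (0 # p)"
    using rad_nonneg by (simp add: path_A_Cons)
  ultimately have "ereal (\<alpha> * (path_len (0 # p) - 1 - path_A (xi \<alpha> C) (0 # p)))
      \<le> ereal (\<alpha> * (path_len p - path_A (xi \<alpha> C) p))"
    using assms(1) by (simp add: mult_left_mono)
  also have "\<dots> \<le> path_time C p"
    using path_time_ge[OF assms(1)] hr by simp
  finally show ?thesis
    using that[of "0 # p"] p False hr by (simp add: is_path_def)
qed

lemma path_time_ge_S:
  assumes "0 \<le> \<alpha>" "S (norm x) (xi \<alpha> C) = ereal s" "s \<le> 1"
    and p: "is_path p" "hd p \<in> cball 0 1" "last p = x"
  shows "ereal (\<alpha> * (norm x * (1 - s) - 1)) \<le> path_time C p"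
proof -
  obtain q where q: "is_path q" "hd q = 0" "last q = x"
    and time: "ereal (\<alpha> * (path_len q - 1 - path_A (xi \<alpha> C) q)) \<le> path_time C p"
    using path_from_unit_ball_reroute[OF assms(1) p] .
  have "norm x \<le> path_len q"
    using dist_hd_last_le_path_len[of q] q by (simp add: is_path_def)
  then have "\<alpha> * (norm x * (1 - s) - 1) \<le> \<alpha> * (path_len q * (1 - s) - 1)"
    using assms(1,3) by (intro mult_left_mono) (auto intro: mult_right_mono)
  also have "\<dots> \<le> \<alpha> * (path_len q - 1 - path_A (xi \<alpha> C) q)"
    using path_A_le_S(2)[OF q assms(2)] assms(1) by (intro mult_left_mono) (auto simp: algebra_simps)
  finally show ?thesis
    using time by (meson ereal_less_eq(3) order_trans)
qed

lemma passage_time_ge: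
  assumes "0 \<le> \<alpha>" "x \<notin> cball 0 1"
  shows "ereal \<alpha> * (1 - S (norm x) (xi \<alpha> C) - ereal (1 / norm x))
    \<le> passage_time C (cball 0 1) x / ereal (norm x)"
proof -
  define R where "R = ereal \<alpha> * (1 - S (norm x) (xi \<alpha> C) - ereal (1 / norm x))"
  have x: "1 < norm x"
    using assms(2) by simp
  then have "x \<noteq> 0"
    by auto
  have "ereal (norm x) * R \<le> path_time C p"
    if p: "is_path p" "hd p \<in> cball 0 1" "last p = x" for p
  proof (cases "1 \<le> S (norm x) (xi \<alpha> C)")
    case True
    moreover have "0 < 1 / norm x"
      using \<open>x \<noteq> 0\<close> by simp
    ultimately have "1 - S (norm x) (xi \<alpha> C) - ereal (1 / norm x) \<le> 0"
      using ereal_diff_le_mono_left ereal_diff_nonpos by fastforce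
    then have "R \<le> 0"
      unfolding R_def using assms(1) by (simp add: ereal_mult_le_0_iff)
    then have "ereal (norm x) * R \<le> 0"
      by (simp add: ereal_mult_le_0_iff)
    then show ?thesis
      using path_time_nonneg[of p] by (rule order_trans)
  next
    case False
    have "is_path [0, 2 *\<^sub>R x]" "path_len [0, 2 *\<^sub>R x] > norm x"
      using x by (auto simp: is_path_def path_len_Cons_Cons path_len_singleton)
    then have "ereal (path_A (xi \<alpha> C) [0, 2 *\<^sub>R x] / path_len [0, 2 *\<^sub>R x])
        \<le> S (norm x) (xi \<alpha> C)"
      unfolding S_def by (intro SUP_upper) auto
    with False obtain s where s: "S (norm x) (xi \<alpha> C) = ereal s" "s < 1"
      by (cases "S (norm x) (xi \<alpha> C)") auto
    have "ereal (norm x) * R = ereal (\<alpha> * (norm x * (1 - s) - 1))"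
      unfolding R_def s(1) using \<open>x \<noteq> 0\<close> by (simp add: one_ereal_def field_simps)
    then show ?thesis
      using path_time_ge_S[OF assms(1) s(1) _ p] s(2) by simp
  qed
  then have "ereal (norm x) * R \<le> passage_time C (cball 0 1) x"
    unfolding passage_time_def by (intro INF_greatest) auto
  then show ?thesis
    using \<open>x \<noteq> 0\<close> ereal_le_divide_pos[of "ereal (norm x)" R] unfolding R_def by simp
qed

end

lemma
  fixes A :: "(real ^ 'd::finite) set"
  assumes \<mu>: "prob_space \<mu>" "sets \<mu> = sets borel"
    and sets: "A \<in> sets borel" "B \<in> sets borel" "C \<in> sets borel"
  shows Times_in_sets_intensity: "A \<times> (B \<times> C) \<in> sets (intensity \<mu> :: 'd pt measure)"
    and emeasure_intensity_Times: "emeasure (intensity \<mu> :: 'd pt measure) (A \<times> (B \<times> C))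
      = emeasure lborel A * (emeasure lborel (B \<inter> {0..}) * emeasure \<mu> C)"
proof -
  let ?D = "density lborel (indicator {0..} :: real \<Rightarrow> ennreal)"
  have "sigma_finite_measure ?D"
    by (subst sigma_finite_measure.sigma_finite_iff_density_finite'[OF sigma_finite_lborel])
      (auto split: split_indicator)
  moreover have \<mu>_sigma_finite: "sigma_finite_measure \<mu>"
    using \<mu> by (simp add: prob_space_imp_sigma_finite)
  ultimately have "sigma_finite_measure (?D \<Otimes>\<^sub>M \<mu>)"
    by (rule sigma_finite_pair_measure)
  moreover have BC: "B \<times> C \<in> sets (?D \<Otimes>\<^sub>M \<mu>)"
    using sets \<mu> by (intro pair_measureI) auto
  ultimately have "emeasure (intensity \<mu> :: 'd pt measure) (A \<times> (B \<times> C))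
      = emeasure lborel A * emeasure (?D \<Otimes>\<^sub>M \<mu>) (B \<times> C)"
    unfolding intensity_def using sets
    by (intro sigma_finite_measure.emeasure_pair_measure_Times) auto
  also have "emeasure (?D \<Otimes>\<^sub>M \<mu>) (B \<times> C) = emeasure ?D B * emeasure \<mu> C"
    using sets \<mu> by (intro sigma_finite_measure.emeasure_pair_measure_Times[OF \<mu>_sigma_finite]) auto
  also have "emeasure ?D B = emeasure lborel (B \<inter> {0..})"
  proof -
    have "emeasure ?D B = (\<integral>\<^sup>+ x. indicator {0..} x * indicator B x \<partial>lborel)"
      using sets by (intro emeasure_density) auto
    also have "\<dots> = (\<integral>\<^sup>+ x. indicator (B \<inter> {0..}) x \<partial>lborel)"
      by (intro nn_integral_cong) (auto split: split_indicator)
    finally show ?thesis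
      using sets by simp
  qed
  finally show "emeasure (intensity \<mu> :: 'd pt measure) (A \<times> (B \<times> C))
      = emeasure lborel A * (emeasure lborel (B \<inter> {0..}) * emeasure \<mu> C)" .
  show "A \<times> (B \<times> C) \<in> sets (intensity \<mu> :: 'd pt measure)"
    unfolding intensity_def using sets BC \<mu> by (intro pair_measureI) auto
qed

context
  fixes M :: "'a measure" and N :: "'a \<Rightarrow> 'b set" and \<nu> :: "'b measure"
  assumes ppp: "poisson_point_process M N \<nu>"
begin

interpretation prob_space M
  using ppp by (simp add: poisson_point_process_def)

lemma poisson_point_process_count_event:
  assumes "A \<in> sets \<nu>" "emeasure \<nu> A < \<infinity>"
  shows "{\<omega> \<in> space M. card (N \<omega> \<inter> A) \<in> K} \<in> sets M"
proof -
  have "(\<lambda>\<omega>. card (N \<omega> \<inter> A)) \<in> measurable M (count_space UNIV)"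
    using ppp assms unfolding poisson_point_process_def by blast
  from measurable_sets[OF this, of K] show ?thesis
    by (simp add: vimage_def Int_def conj_commute)
qed

lemma poisson_point_process_prob_count:
  assumes "A \<in> sets \<nu>" "emeasure \<nu> A < \<infinity>"
  shows "prob {\<omega> \<in> space M. card (N \<omega> \<inter> A) = k}
    = measure \<nu> A ^ k / fact k * exp (- measure \<nu> A)"
  using ppp assms unfolding poisson_point_process_def by blast

lemma poisson_point_process_AE_disjoint_null:
  assumes "A \<in> sets \<nu>" "emeasure \<nu> A = 0"
  shows "AE \<omega> in M. N \<omega> \<inter> A = {}"
proof -
  have "AE \<omega> in M. finite (N \<omega> \<inter> A)"
    using ppp assms unfolding poisson_point_process_def by auto
  moreover have "AE \<omega> in M. \<omega> \<in> {\<omega> \<in> space M. card (N \<omega> \<inter> A) \<in> {0}}"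
    using assms poisson_point_process_prob_count[of A 0]
    by (intro AE_prob_1 poisson_point_process_count_event) (auto simp: measure_def)
  ultimately show ?thesis
    by eventually_elim auto
qed

text \<open>\<open>1 - e\<^sup>-\<^sup>\<lambda> (1 + \<lambda>) \<le> \<lambda>\<^sup>2\<close> follows from \<open>1 - \<lambda> \<le> e\<^sup>-\<^sup>\<lambda>\<close>.\<close>
lemma poisson_point_process_prob_two_points:
  assumes A: "A \<in> sets \<nu>" "emeasure \<nu> A < \<infinity>"
  shows "prob {\<omega> \<in> space M. 2 \<le> card (N \<omega> \<inter> A)} \<le> (measure \<nu> A)\<^sup>2"
proof -
  define l where "l = measure \<nu> A"
  let ?E = "\<lambda>k. {\<omega> \<in> space M. card (N \<omega> \<inter> A) = k}"
  have events: "?E k \<in> events" for k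
    using poisson_point_process_count_event[OF A, of "{k}"] by simp
  have "{\<omega> \<in> space M. 2 \<le> card (N \<omega> \<inter> A)} = space M - (?E 0 \<union> ?E 1)"
    by auto
  then have "prob {\<omega> \<in> space M. 2 \<le> card (N \<omega> \<inter> A)} = 1 - prob (?E 0 \<union> ?E 1)"
    using events by (simp add: prob_compl)
  also have "prob (?E 0 \<union> ?E 1) = exp (- l) + l * exp (- l)"
    using poisson_point_process_prob_count[OF A]
    by (subst finite_measure_Union) (auto simp: events l_def)
  also have "1 - (exp (- l) + l * exp (- l)) \<le> l\<^sup>2"
  proof -
    have "(1 - l) * (1 + l) \<le> exp (- l) * (1 + l)"
      using exp_ge_add_one_self[of "- l"] by (intro mult_right_mono) (auto simp: l_def)
    then show ?thesis
      by (simp add: algebra_simps power2_eq_square)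
  qed
  finally show ?thesis
    by (simp add: l_def)
qed

text \<open>By the union bound, the probability that for every \<open>m\<close> some cell of the \<open>m\<close>-th family
  holds two points is at most \<open>\<Sum>\<^sub>k \<nu>(A m k)\<^sup>2\<close>, for each \<open>m\<close>.\<close>
lemma poisson_point_process_AE_separated_by_cells:
  fixes A :: "nat \<Rightarrow> 'k \<Rightarrow> 'b set" and I :: "nat \<Rightarrow> 'k set"
  assumes I: "\<And>m. finite (I m)"
    and A: "\<And>m k. k \<in> I m \<Longrightarrow> A m k \<in> sets \<nu>" "\<And>m k. k \<in> I m \<Longrightarrow> emeasure \<nu> (A m k) < \<infinity>"
    and small: "(\<lambda>m. \<Sum>k\<in>I m. (measure \<nu> (A m k))\<^sup>2) \<longlonglongrightarrow> 0"
  shows "AE \<omega> in M. \<exists>m. \<forall>k\<in>I m. \<forall>p\<in>N \<omega> \<inter> A m k. \<forall>q\<in>N \<omega> \<inter> A m k. p = q"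
proof -
  define G where "G m k = {\<omega> \<in> space M. card (N \<omega> \<inter> A m k) \<in> {2..}}" for m k
  have G_events: "G m k \<in> events" if "k \<in> I m" for m k
    unfolding G_def using that A by (intro poisson_point_process_count_event)
  define Bad where "Bad = (\<Inter>m. \<Union>k\<in>I m. G m k)"
  have Bad_events: "Bad \<in> events"
    unfolding Bad_def using G_events I by (auto intro!: sets.countable_INT sets.finite_UN)
  have "prob Bad \<le> (\<Sum>k\<in>I m. (measure \<nu> (A m k))\<^sup>2)" for m
  proof -
    have "prob Bad \<le> prob (\<Union>k\<in>I m. G m k)"
      using Bad_events G_events I by (intro finite_measure_mono) (auto simp: Bad_def)
    also have "\<dots> \<le> (\<Sum>k\<in>I m. prob (G m k))"
      using G_events I by (intro finite_measure_subadditive_finite) auto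
    also have "\<dots> \<le> (\<Sum>k\<in>I m. (measure \<nu> (A m k))\<^sup>2)"
      using poisson_point_process_prob_two_points A unfolding G_def
      by (intro sum_mono) (simp add: atLeast_def)
    finally show ?thesis .
  qed
  then have "prob Bad \<le> 0"
    using small by (intro LIMSEQ_le_const) auto
  then have "Bad \<in> null_sets M"
    using Bad_events by (simp add: null_sets_def emeasure_eq_measure measure_nonneg antisym)
  then have "AE \<omega> in M. \<omega> \<notin> Bad"
    by (rule AE_not_in)
  moreover have "AE \<omega> in M. \<forall>m. \<forall>k\<in>I m. finite (N \<omega> \<inter> A m k)"
    unfolding AE_all_countable using I A ppp
    by (intro allI AE_finite_allI) (auto simp: poisson_point_process_def)
  ultimately show ?thesis
    using AE_space
  proof eventually_elim
    case (elim \<omega>)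
    then obtain m where "\<forall>k\<in>I m. \<omega> \<notin> G m k"
      unfolding Bad_def by auto
    with elim show ?case
      by (intro exI[of _ m]) (auto simp: G_def card_le_Suc0_iff_eq[symmetric] not_le)
  qed
qed

end

text \<open>The cells of the \<open>m\<close>-th grid: cubes of side \<open>1/(m+1)\<close> covering \<open>[-(N+1), N+1]\<^sup>d\<close>, times
  the times \<open>[-(N+1), N+1]\<close>, times all radii.\<close>
definition grid_cube :: "nat \<Rightarrow> nat \<Rightarrow> ('d::finite \<Rightarrow> nat) \<Rightarrow> (real ^ 'd) set" where
  "grid_cube N m k = cbox (\<chi> i. - real (Suc N) + real (k i) / real (Suc m))
                          (\<chi> i. - real (Suc N) + (real (k i) + 1) / real (Suc m))"

definition grid_cell :: "nat \<Rightarrow> nat \<Rightarrow> ('d::finite \<Rightarrow> nat) \<Rightarrow> 'd pt set" where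
  "grid_cell N m k = grid_cube N m k \<times> ({- real (Suc N)..real (Suc N)} \<times> UNIV)"

definition grid_index :: "nat \<Rightarrow> nat \<Rightarrow> ('d::finite \<Rightarrow> nat) set" where
  "grid_index N m = PiE UNIV (\<lambda>_. {0..2 * Suc N * Suc m})"

lemma finite_grid_index: "finite (grid_index N m)"
  unfolding grid_index_def by (intro finite_PiE) auto

lemma card_grid_index:
  "card (grid_index N m :: ('d::finite \<Rightarrow> nat) set) = (2 * Suc N * Suc m + 1) ^ CARD('d)"
  unfolding grid_index_def by (subst card_PiE) auto

lemma emeasure_grid_cube:
  "emeasure lborel (grid_cube N m k :: (real ^ 'd::finite) set) = ennreal ((1 / real (Suc m)) ^ CARD('d))"
proof -
  let ?l = "(\<chi> i. - real (Suc N) + real (k i) / real (Suc m)) :: real ^ 'd"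
  let ?u = "(\<chi> i. - real (Suc N) + (real (k i) + 1) / real (Suc m)) :: real ^ 'd"
  have side: "(?u - ?l) \<bullet> b = 1 / real (Suc m)" if b: "b \<in> Basis" for b
  proof -
    obtain i where "b = axis i 1"
      using b unfolding Basis_vec_def Basis_real_def by auto
    then show ?thesis
      by (simp add: inner_axis add_divide_distrib)
  qed
  then have "\<forall>b\<in>Basis. ?l \<bullet> b \<le> ?u \<bullet> b"
    by (metis diff_ge_0_iff_ge inner_diff_left of_nat_0_le_iff zero_le_divide_1_iff)
  then have "emeasure lborel (cbox ?l ?u) = (\<Prod>b\<in>Basis. (?u - ?l) \<bullet> b)"
    by (simp add: emeasure_lborel_cbox_eq)
  also have "(\<Prod>b\<in>(Basis :: (real ^ 'd) set). (?u - ?l) \<bullet> b) = (1 / real (Suc m)) ^ CARD('d)"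
    using side by simp
  finally show ?thesis
    unfolding grid_cube_def by simp
qed

lemma grid_cube_cover:
  fixes c :: "real ^ 'd::finite"
  assumes "\<And>i. \<bar>c $ i\<bar> \<le> real (Suc N)"
  obtains k where "k \<in> grid_index N m" "c \<in> grid_cube N m k"
proof -
  define n where "n = real (Suc N)"
  define h where "h = real (Suc m)"
  have h_pos: "h > 0"
    by (simp add: h_def)
  define k where "k i = nat \<lfloor>(c $ i + n) * h\<rfloor>" for i
  have "(c $ i + n) * h \<ge> 0" for i
    using assms[of i] h_pos by (simp add: n_def abs_le_iff)
  then have k_eq: "real (k i) = of_int \<lfloor>(c $ i + n) * h\<rfloor>" for i
    by (simp add: k_def)
  have k_floor: "real (k i) \<le> (c $ i + n) * h" "(c $ i + n) * h < real (k i) + 1" for i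
    using k_eq[of i] by linarith+
  have "(c $ i + n) * h \<le> 2 * n * h" for i
    using assms[of i] h_pos by (intro mult_right_mono) (auto simp: n_def abs_le_iff)
  then have "real (k i) \<le> 2 * n * h" for i
    using k_floor(1)[of i] by (meson order_trans)
  then have "real (k i) \<le> real (2 * Suc N * Suc m)" for i
    unfolding n_def h_def by (simp add: algebra_simps)
  then have "k i \<le> 2 * Suc N * Suc m" for i
    using of_nat_le_iff by blast
  then have "k \<in> grid_index N m"
    unfolding grid_index_def by (auto simp: PiE_UNIV_domain simp del: mult_Suc mult_Suc_right)
  moreover have "c \<in> grid_cube N m k"
    unfolding grid_cube_def mem_box_cart
  proof
    fix i
    have "real (k i) / h \<le> c $ i + n" "c $ i + n \<le> (real (k i) + 1) / h"
      using k_floor[of i] h_pos by (simp_all add: divide_le_eq le_divide_eq)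
    then show "(\<chi> i. - real (Suc N) + real (k i) / real (Suc m)) $ i \<le> c $ i \<and>
        c $ i \<le> (\<chi> i. - real (Suc N) + (real (k i) + 1) / real (Suc m)) $ i"
      by (simp add: n_def h_def)
  qed
  ultimately show ?thesis
    using that by blast
qed

lemma grid_sum_bound:
  fixes n h :: real and D :: nat
  assumes "1 \<le> n" "1 \<le> h" "1 \<le> D"
  shows "(2 * n * h + 1) ^ D * ((1 / h) ^ D * n)\<^sup>2 \<le> (3 * n) ^ D * n\<^sup>2 / h"
proof -
  have "1 \<le> n * h"
    using assms mult_mono[of 1 n 1 h] by simp
  then have "2 * n * h + 1 \<le> 3 * n * h"
    by linarith
  then have "(2 * n * h + 1) ^ D * ((1 / h) ^ D * n)\<^sup>2 \<le> (3 * n * h) ^ D * ((1 / h) ^ D * n)\<^sup>2"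
    by (intro mult_right_mono power_mono) auto
  also have "\<dots> = (3 * n) ^ D * ((1 / h) ^ D * n\<^sup>2)"
    using assms by (simp add: power_mult_distrib power2_eq_square field_simps)
  also have "\<dots> \<le> (3 * n) ^ D * ((1 / h) ^ 1 * n\<^sup>2)"
    using assms by (intro mult_left_mono mult_right_mono power_decreasing) auto
  finally show ?thesis
    by simp
qed

lemma
  fixes \<mu> :: "real measure"
  assumes \<mu>: "prob_space \<mu>" "sets \<mu> = sets borel"
  shows grid_cell_in_sets_intensity: "grid_cell N m k \<in> sets (intensity \<mu> :: 'd::finite pt measure)"
    and emeasure_intensity_grid_cell: "emeasure (intensity \<mu> :: 'd pt measure) (grid_cell N m k)
      = ennreal ((1 / real (Suc m)) ^ CARD('d) * real (Suc N))"
proof -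
  have cube: "grid_cube N m k \<in> sets borel"
    unfolding grid_cube_def by simp
  then show "grid_cell N m k \<in> sets (intensity \<mu> :: 'd pt measure)"
    unfolding grid_cell_def by (intro Times_in_sets_intensity[OF \<mu> cube]) auto
  have "emeasure \<mu> UNIV = 1"
    using prob_space.emeasure_space_1[OF \<mu>(1)] sets_eq_imp_space_eq[OF \<mu>(2)] by simp
  moreover have "{- real (Suc N)..real (Suc N)} \<inter> {0..} = {0..real (Suc N)}"
    by auto
  ultimately show "emeasure (intensity \<mu> :: 'd pt measure) (grid_cell N m k)
      = ennreal ((1 / real (Suc m)) ^ CARD('d) * real (Suc N))"
    unfolding grid_cell_def using emeasure_intensity_Times[OF \<mu> cube]
    by (simp add: emeasure_grid_cube ennreal_mult)
qed

lemma sum_sq_measure_grid_cells_tendsto_0: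
  assumes \<mu>: "prob_space \<mu>" "sets \<mu> = sets borel"
  shows "(\<lambda>m. \<Sum>k\<in>grid_index N m. (measure (intensity \<mu>) (grid_cell N m k :: 'd::finite pt set))\<^sup>2)
    \<longlonglongrightarrow> 0"
proof (rule Lim_null_comparison)
  define n where "n = real (Suc N)"
  let ?C = "(3 * n) ^ CARD('d) * n\<^sup>2"
  show "(\<lambda>m. ?C / real (Suc m)) \<longlonglongrightarrow> 0"
    using LIMSEQ_Suc[OF lim_const_over_n] .
  show "\<forall>\<^sub>F m in sequentially.
      norm (\<Sum>k\<in>grid_index N m. (measure (intensity \<mu>) (grid_cell N m k :: 'd pt set))\<^sup>2)
        \<le> ?C / real (Suc m)"
  proof (intro always_eventually allI)
    fix m
    have "measure (intensity \<mu>) (grid_cell N m k :: 'd pt set) = (1 / real (Suc m)) ^ CARD('d) * n"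
      for k
      unfolding measure_def emeasure_intensity_grid_cell[OF \<mu>] n_def by simp
    moreover have "real (card (grid_index N m :: ('d \<Rightarrow> nat) set))
        = (2 * n * real (Suc m) + 1) ^ CARD('d)"
      unfolding card_grid_index n_def by (simp add: algebra_simps)
    ultimately have "(\<Sum>k\<in>grid_index N m. (measure (intensity \<mu>) (grid_cell N m k :: 'd pt set))\<^sup>2)
        = (2 * n * real (Suc m) + 1) ^ CARD('d) * ((1 / real (Suc m)) ^ CARD('d) * n)\<^sup>2"
      by simp
    also have "\<dots> \<le> ?C / real (Suc m)"
      by (rule grid_sum_bound) (auto simp: n_def)
    finally show "norm (\<Sum>k\<in>grid_index N m. (measure (intensity \<mu>) (grid_cell N m k :: 'd pt set))\<^sup>2)
        \<le> ?C / real (Suc m)"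
      by (simp add: abs_of_nonneg sum_nonneg)
  qed
qed

lemma AE_poisson_point_process_inj_on_centres:
  fixes chi :: "'a \<Rightarrow> ('d::finite) pt set"
  assumes ppp: "poisson_point_process M chi (intensity \<mu>)"
    and \<mu>: "prob_space \<mu>" "sets \<mu> = sets borel"
  shows "AE \<omega> in M. inj_on fst (chi \<omega>)"
proof -
  have "AE \<omega> in M. \<forall>N. \<exists>m. \<forall>k\<in>grid_index N m.
      \<forall>p\<in>chi \<omega> \<inter> grid_cell N m k. \<forall>q\<in>chi \<omega> \<inter> grid_cell N m k. p = q"
    unfolding AE_all_countable
    using poisson_point_process_AE_separated_by_cells[OF ppp finite_grid_index
        grid_cell_in_sets_intensity[OF \<mu>] _ sum_sq_measure_grid_cells_tendsto_0[OF \<mu>]]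
    by (simp add: emeasure_intensity_grid_cell[OF \<mu>])
  then show ?thesis
  proof eventually_elim
    case (elim \<omega>)
    show ?case
    proof (rule inj_onI)
      fix p q
      assume pq: "p \<in> chi \<omega>" "q \<in> chi \<omega>" "fst p = fst q"
      obtain N where N: "max (norm (fst p)) (max \<bar>fst (snd p)\<bar> \<bar>fst (snd q)\<bar>) < real N"
        using reals_Archimedean2 by blast
      obtain m where m: "\<forall>k\<in>grid_index N m.
          \<forall>p\<in>chi \<omega> \<inter> grid_cell N m k. \<forall>q\<in>chi \<omega> \<inter> grid_cell N m k. p = q"
        using elim by blast
      have "\<bar>fst p $ i\<bar> \<le> real (Suc N)" for i
        using component_le_norm_cart[of "fst p" i] N by simp
      then obtain k where k: "k \<in> grid_index N m" "fst p \<in> grid_cube N m k"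
        by (rule grid_cube_cover)
      have "p \<in> grid_cell N m k" "q \<in> grid_cell N m k"
        using k(2) N pq(3) by (cases p, cases q, auto simp: grid_cell_def abs_le_iff)+
      then show "p = q"
        using m k(1) pq(1,2) by blast
    qed
  qed
qed

lemma AE_poisson_point_process_marks_pos:
  fixes chi :: "'a \<Rightarrow> ('d::finite) pt set"
  assumes ppp: "poisson_point_process M chi (intensity \<mu>)"
    and \<mu>: "prob_space \<mu>" "sets \<mu> = sets borel" "emeasure \<mu> {..0} = 0"
  shows "AE \<omega> in M. \<forall>c t r. (c, t, r) \<in> chi \<omega> \<longrightarrow> 0 \<le> t \<and> 0 < r"
proof -
  let ?negative_time = "(UNIV :: (real ^ 'd) set) \<times> ({..<0} \<times> UNIV)"
  let ?nonpos_radius = "(UNIV :: (real ^ 'd) set) \<times> (UNIV \<times> {..0})"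
  have "{..<0::real} \<inter> {0..} = {}"
    by auto
  then have "AE \<omega> in M. chi \<omega> \<inter> ?negative_time = {}"
    using emeasure_intensity_Times[OF \<mu>(1,2), of UNIV "{..<0}" UNIV]
    by (intro poisson_point_process_AE_disjoint_null[OF ppp] Times_in_sets_intensity[OF \<mu>(1,2)])
      auto
  moreover have "AE \<omega> in M. chi \<omega> \<inter> ?nonpos_radius = {}"
    using emeasure_intensity_Times[OF \<mu>(1,2), of UNIV UNIV "{..0}"] \<mu>(3)
    by (intro poisson_point_process_AE_disjoint_null[OF ppp] Times_in_sets_intensity[OF \<mu>(1,2)])
      auto
  ultimately show ?thesis
    by eventually_elim (auto simp: not_le not_less)
qed

theorem lemma2p4:
  fixes M :: "'a measure"
    and chi :: "'a \<Rightarrow> ('d::finite) pt set"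
    and \<mu> :: "real measure"
    and \<alpha> :: real
  assumes "prob_space \<mu>" and "sets \<mu> = sets borel" and "emeasure \<mu> {.. 0} = 0"
    and "\<alpha> > 0"
    and "poisson_point_process M chi (intensity \<mu>)"
  shows "AE \<omega> in M. \<forall>x :: real ^ 'd. x \<notin> cball 0 1 \<longrightarrow>
           passage_time (chi \<omega>) (cball 0 1) x / ereal (norm x)
             \<ge> ereal \<alpha> * (1 - S (norm x) (xi \<alpha> (chi \<omega>)) - ereal (1 / norm x))"
  using AE_poisson_point_process_marks_pos[OF assms(5,1,2,3)]
    AE_poisson_point_process_inj_on_centres[OF assms(5,1,2)]
proof eventually_elim
  case (elim \<omega>)
  then interpret admissible_config "chi \<omega>"
    by unfold_locales blast+
  show ?case
    using passage_time_ge assms(4) by simp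
qed

end
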